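(* Let $k\ge2$ and $\ell\ge2$, and let $(F,(a,b))$ be an edge-rooted connected graph such that (i) $F$ has no cut-vertex, (ii) every edge of $F$ is contained in a triangle, and (iii) there is at most one homomorphism $F\to F$ other than the identity, and if it exists it is an automorphism $\varphi$ with $\varphi(a)=b$, $\varphi(b)=a$. If $\ell$ is odd, or if $\ell$ is even and $F$ is rigid, then the sun graph $G((F,(a,b)),2k,\ell)$ is not positive.
   Context: An edge-rooted graph is $(F,(a,b))$ with $F$ a finite simple graph and $(a,b)$ an oriented edge of $F$. A graph is rigid if its only endomorphism is the identity. The sun graph $G((F,(a,b)),2k,\ell)$ is obtained from the cycle $C_{2k(\ell+1)}=v_1v_2\cdots v_{2k(\ell+1)}$ (indices modulo $2k(\ell+1)$) by gluing $2k$ disjoint copies $F^1,\dots,F^{2k}$ of $F$, where for each $i\in[2k]$ the root pair $(a,b)$ of $F^i$ is identified with $(v_{i(\ell+1)+1},v_{i(\ell+1)+2})$ (so the root edge coincides with that cycle edge); consecutive copies are thus separated by paths of length $\ell$ along the cycle. An edge-weighted graph $H$ assigns a real weight $\beta_{xy}$ to each edge; $\hom(G,H)=\sum_{\varphi}\prod_{uv\in E(G)}\beta_{\varphi(u)\varphi(v)}$ over all homomorphisms $\varphi:G\to H$. A graph $G$ is positive if $\hom(G,H)\ge0$ for every edge-weighted graph $H$ (weights may be negative). *)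

theory Defs
  imports Complex_Main "HOL-Library.FuncSet"
begin

definition simple_graph :: "'a set \<Rightarrow> ('a \<Rightarrow> 'a \<Rightarrow> bool) \<Rightarrow> bool" where
  "simple_graph V E \<longleftrightarrow> finite V \<and> (\<forall>x y. E x y \<longrightarrow> x \<in> V \<and> y \<in> V)
     \<and> (\<forall>x y. E x y \<longrightarrow> E y x) \<and> (\<forall>x. \<not> E x x)"

definition edges :: "('a \<Rightarrow> 'a \<Rightarrow> bool) \<Rightarrow> 'a set set" where
  "edges E = {{x, y} | x y. E x y}"

definition homs :: "'a set \<Rightarrow> ('a \<Rightarrow> 'a \<Rightarrow> bool) \<Rightarrow> 'b set \<Rightarrow> ('b \<Rightarrow> 'b \<Rightarrow> bool) \<Rightarrow> ('a \<Rightarrow> 'b) set" where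
  "homs V E W D = {f \<in> V \<rightarrow>\<^sub>E W. \<forall>x y. E x y \<longrightarrow> D (f x) (f y)}"

definition automorphism :: "'a set \<Rightarrow> ('a \<Rightarrow> 'a \<Rightarrow> bool) \<Rightarrow> ('a \<Rightarrow> 'a) \<Rightarrow> bool" where
  "automorphism V E f \<longleftrightarrow> f \<in> V \<rightarrow>\<^sub>E V \<and> bij_betw f V V
     \<and> (\<forall>x\<in>V. \<forall>y\<in>V. E x y \<longleftrightarrow> E (f x) (f y))"

definition rigid :: "'a set \<Rightarrow> ('a \<Rightarrow> 'a \<Rightarrow> bool) \<Rightarrow> bool" where
  "rigid V E \<longleftrightarrow> homs V E V E = {restrict id V}"

definition connected :: "'a set \<Rightarrow> ('a \<Rightarrow> 'a \<Rightarrow> bool) \<Rightarrow> bool" where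
  "connected V E \<longleftrightarrow> (\<forall>x\<in>V. \<forall>y\<in>V. (\<lambda>u w. E u w \<and> u \<in> V \<and> w \<in> V)\<^sup>*\<^sup>* x y)"

definition cut_vertex :: "'a set \<Rightarrow> ('a \<Rightarrow> 'a \<Rightarrow> bool) \<Rightarrow> 'a \<Rightarrow> bool" where
  "cut_vertex V E v \<longleftrightarrow> v \<in> V \<and> \<not> connected (V - {v}) (\<lambda>x y. E x y \<and> x \<noteq> v \<and> y \<noteq> v)"

definition edges_in_triangles :: "('a \<Rightarrow> 'a \<Rightarrow> bool) \<Rightarrow> bool" where
  "edges_in_triangles E \<longleftrightarrow> (\<forall>x y. E x y \<longrightarrow> (\<exists>z. E x z \<and> E y z))"

definition hom_weight :: "'a set \<Rightarrow> ('a \<Rightarrow> 'a \<Rightarrow> bool) \<Rightarrow> 'b set \<Rightarrow> ('b \<Rightarrow> 'b \<Rightarrow> bool)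
    \<Rightarrow> ('b set \<Rightarrow> real) \<Rightarrow> real" where
  "hom_weight V E W D w = (\<Sum>f\<in>homs V E W D. \<Prod>e\<in>edges E. w (f ` e))"

text \<open>Positive: hom(G,H) \<ge> 0 for every finite edge-weighted simple graph H
  (vertices of H taken, w.l.o.g., to be natural numbers).\<close>
definition positive :: "'a set \<Rightarrow> ('a \<Rightarrow> 'a \<Rightarrow> bool) \<Rightarrow> bool" where
  "positive V E \<longleftrightarrow> (\<forall>(W::nat set) D w. simple_graph W D \<longrightarrow> hom_weight V E W D w \<ge> 0)"

text \<open>Cycle vertex v_m (1-based, indices modulo
  N = 2k(l+1)) is represented as Inl ((m-1) mod N); the non-root vertex v of the
  i-th copy F^i is Inr (i,v). The roots a,b of F^i are glued to
  v_{i(l+1)+1}, v_{i(l+1)+2}, i.e. to Inl ((i(l+1)) mod N), Inl ((i(l+1)+1) mod N).\<close>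
definition sun_emb :: "'a \<Rightarrow> 'a \<Rightarrow> nat \<Rightarrow> nat \<Rightarrow> nat \<Rightarrow> 'a \<Rightarrow> nat + nat \<times> 'a" where
  "sun_emb a b k l i v =
     (if v = a then Inl ((i * (l + 1)) mod (2 * k * (l + 1)))
      else if v = b then Inl ((i * (l + 1) + 1) mod (2 * k * (l + 1)))
      else Inr (i, v))"

definition sun_V :: "'a set \<Rightarrow> 'a \<Rightarrow> 'a \<Rightarrow> nat \<Rightarrow> nat \<Rightarrow> (nat + nat \<times> 'a) set" where
  "sun_V V a b k l = Inl ` {0..<2 * k * (l + 1)}
     \<union> {Inr (i, v) | i v. i \<in> {1..2 * k} \<and> v \<in> V - {a, b}}"

definition sun_E :: "('a \<Rightarrow> 'a \<Rightarrow> bool) \<Rightarrow> 'a \<Rightarrow> 'a \<Rightarrow> nat \<Rightarrow> nat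
    \<Rightarrow> (nat + nat \<times> 'a) \<Rightarrow> (nat + nat \<times> 'a) \<Rightarrow> bool" where
  "sun_E E a b k l x y \<longleftrightarrow>
     (\<exists>c < 2 * k * (l + 1).
        (x = Inl c \<and> y = Inl ((c + 1) mod (2 * k * (l + 1))))
      \<or> (y = Inl c \<and> x = Inl ((c + 1) mod (2 * k * (l + 1)))))
   \<or> (\<exists>i \<in> {1..2 * k}. \<exists>u v. E u v \<and> x = sun_emb a b k l i u \<and> y = sun_emb a b k l i v)"

end

theory Submission
  imports Defs "HOL-Number_Theory.Cong"
begin

text \<open>
  Take for H the sun graph G itself, weighted by -t on one path edge of the cycle, by t on
  the other path edges and by 1 on the edges of the copies of F, where t is the number of
  endomorphisms of G; let P be the number of path edges. Since l \<ge> 2, no path edge lies in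
  a triangle, while every edge of a copy of F does; so endomorphisms map copy edges to copy
  edges, and the weight of an endomorphism is a product over the path edges only. If some
  path edge is not mapped onto a path edge, this product is at most t^(P-1). Otherwise the
  endomorphism walks around the cycle, and following the position along each path shows
  that it never turns back: by parity when l is odd, and because rigidity of F forces root
  edges to keep their orientation when l is even. Such an endomorphism permutes the path
  edges and has weight -t^P. The identity is one of them, so
  hom(G,H) \<le> -t^P + (t-1) t^(P-1) < 0.
\<close>

lemma unit_walk_monotone:
  fixes p :: "nat \<Rightarrow> int" and s :: int
  assumes step: "\<And>j. j < n \<Longrightarrow> \<bar>p (Suc j) - p j\<bar> = 1"
    and s: "s = 1 \<or> s = -1"
    and ends: "p n = p 0 \<or> p n = p 0 + s * int n"
    and odd_or_moves: "odd n \<or> p n \<noteq> p 0"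
  shows "p n = p 0 + s * int n" and "\<And>j. j < n \<Longrightarrow> p (Suc j) = p j + s"
proof -
  define \<delta> where "\<delta> j = p (Suc j) - p j" for j
  have total: "(\<Sum>j<n. \<delta> j) = p n - p 0"
    unfolding \<delta>_def by (rule sum_lessThan_telescope)
  have unit: "\<delta> j = 1 \<or> \<delta> j = -1" if "j < n" for j
    using step[OF that] by (auto simp: \<delta>_def abs_eq_iff)
  have "even (\<Sum>j<n. \<delta> j + 1)"
    by (rule dvd_sum) (use unit in fastforce)
  then have "even (p n - p 0 + int n)"
    by (simp add: sum.distrib total)
  then show moved: "p n = p 0 + s * int n"
    using ends odd_or_moves by auto
  have "(\<Sum>j<n. 1 - s * \<delta> j) = 0"
  proof -
    have "s * s = 1"
      using s by auto
    then show ?thesis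
      using moved by (simp add: sum_subtractf total sum_distrib_left[symmetric] algebra_simps)
  qed
  moreover have "0 \<le> 1 - s * \<delta> j" if "j < n" for j
    using unit[OF that] s by auto
  ultimately have "s * \<delta> j = 1" if "j < n" for j
    using that by (subst (asm) sum_nonneg_eq_0_iff) auto
  then show "p (Suc j) = p j + s" if "j < n" for j
    using that s by (fastforce simp: \<delta>_def)
qed

lemma sum_negative_if_one_term_dominates:
  fixes f :: "'b \<Rightarrow> real"
  assumes "finite S" and "x0 \<in> S"
    and "f x0 = - (real (card S) ^ Suc n)"
    and "\<And>x. x \<in> S \<Longrightarrow> f x \<le> real (card S) ^ n"
  shows "sum f S < 0"
proof -
  define t where "t = real (card S)"
  have "card S \<ge> 1"
    using assms(1,2) by (simp add: Suc_le_eq card_gt_0_iff) blast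
  then have t: "t \<ge> 1" and card_rest: "real (card (S - {x0})) = t - 1"
    using assms(2) by (simp_all add: t_def card_Diff_singleton of_nat_diff)
  have "sum f S = f x0 + sum f (S - {x0})"
    using assms(1,2) by (rule sum.remove)
  also have "sum f (S - {x0}) \<le> (t - 1) * t ^ n"
    using sum_bounded_above[of "S - {x0}" f "t ^ n"] assms(4) card_rest
    by (simp add: t_def)
  finally have "sum f S \<le> - (t ^ n)"
    using assms(3) by (simp add: t_def algebra_simps)
  also have "\<dots> < 0"
    using t by simp
  finally show ?thesis .
qed

section \<open>Relabelling the target graph\<close>

definition image_rel :: "('b \<Rightarrow> 'c) \<Rightarrow> ('b \<Rightarrow> 'b \<Rightarrow> bool) \<Rightarrow> 'c \<Rightarrow> 'c \<Rightarrow> bool" where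
  "image_rel enc D x y \<longleftrightarrow> (\<exists>u v. D u v \<and> x = enc u \<and> y = enc v)"

lemma homs_extensional: "f \<in> homs V E W D \<Longrightarrow> f \<in> extensional V"
  unfolding homs_def by (simp add: PiE_iff)

lemma homs_relabel:
  assumes G: "simple_graph V E" and f: "f \<in> homs V E W D"
  shows "restrict (enc \<circ> f) V \<in> homs V E (enc ` W) (image_rel enc D)"
proof -
  have "x \<in> V \<and> y \<in> V" if "E x y" for x y
    using G that unfolding simple_graph_def by blast
  then show ?thesis
    using f unfolding homs_def image_rel_def by (auto 4 4)
qed

lemma homs_unrelabel:
  assumes G: "simple_graph V E" and H: "simple_graph W D" and enc: "inj_on enc W"
    and g: "g \<in> homs V E (enc ` W) (image_rel enc D)"
  shows "restrict (inv_into W enc \<circ> g) V \<in> homs V E W D"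
  unfolding homs_def
proof (intro CollectI conjI allI impI)
  have "g x \<in> enc ` W" if "x \<in> V" for x
    using g that unfolding homs_def by auto
  then show "restrict (inv_into W enc \<circ> g) V \<in> V \<rightarrow>\<^sub>E W"
    by (simp add: inv_into_into)
  fix x y assume "E x y"
  then obtain u v where uv: "D u v" "g x = enc u" "g y = enc v"
    using g unfolding homs_def image_rel_def by blast
  moreover have "x \<in> V" "y \<in> V" "u \<in> W" "v \<in> W"
    using G H \<open>E x y\<close> \<open>D u v\<close> unfolding simple_graph_def by blast+
  ultimately show "D (restrict (inv_into W enc \<circ> g) V x) (restrict (inv_into W enc \<circ> g) V y)"
    using enc by (simp add: inv_into_f_f)
qed

lemma bij_betw_homs_relabel:
  assumes G: "simple_graph V E" and H: "simple_graph W D" and enc: "inj_on enc W"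
  shows "bij_betw (\<lambda>f. restrict (enc \<circ> f) V)
    (homs V E W D) (homs V E (enc ` W) (image_rel enc D))"
proof (rule bij_betw_byWitness[where f' = "\<lambda>g. restrict (inv_into W enc \<circ> g) V"])
  show "\<forall>f\<in>homs V E W D. restrict (inv_into W enc \<circ> restrict (enc \<circ> f) V) V = f"
  proof
    fix f assume f: "f \<in> homs V E W D"
    then have "f x \<in> W" if "x \<in> V" for x
      using that unfolding homs_def by auto
    then show "restrict (inv_into W enc \<circ> restrict (enc \<circ> f) V) V = f"
      using enc by (intro extensionalityI[OF _ homs_extensional[OF f]]) (auto simp: inv_into_f_f)
  qed
  show "\<forall>g\<in>homs V E (enc ` W) (image_rel enc D).
      restrict (enc \<circ> restrict (inv_into W enc \<circ> g) V) V = g"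
  proof
    fix g assume g: "g \<in> homs V E (enc ` W) (image_rel enc D)"
    then have "g x \<in> enc ` W" if "x \<in> V" for x
      using that unfolding homs_def by auto
    then show "restrict (enc \<circ> restrict (inv_into W enc \<circ> g) V) V = g"
      by (intro extensionalityI[OF _ homs_extensional[OF g]]) (auto simp: f_inv_into_f)
  qed
qed (use homs_relabel[OF G] homs_unrelabel[OF G H enc] in blast)+

lemma hom_weight_relabel:
  assumes G: "simple_graph V E" and H: "simple_graph W D" and enc: "inj_on enc W"
  shows "hom_weight V E W D w
    = hom_weight V E (enc ` W) (image_rel enc D)
        (\<lambda>S. w (inv_into W enc ` S))"
proof -
  have "w (inv_into W enc ` restrict (enc \<circ> f) V ` e) = w (f ` e)"
    if f: "f \<in> homs V E W D" and e: "e \<in> edges E" for f e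
  proof -
    have "e \<subseteq> V" "f ` V \<subseteq> W"
      using G e f unfolding edges_def simple_graph_def homs_def by auto
    then have "inv_into W enc ` restrict (enc \<circ> f) V ` e = f ` e"
      using enc by (auto simp: image_image inv_into_f_f subset_iff intro!: image_cong)
    then show ?thesis
      by simp
  qed
  then show ?thesis
    unfolding hom_weight_def
    by (simp add: sum.reindex_bij_betw[OF bij_betw_homs_relabel[OF G H enc], symmetric])
qed

lemma simple_graph_image_rel:
  assumes H: "simple_graph W D" and enc: "inj_on enc W"
  shows "simple_graph (enc ` W) (image_rel enc D)"
proof -
  have D_W: "u \<in> W \<and> v \<in> W \<and> D v u \<and> \<not> D u u" if "D u v" for u v
    using H that unfolding simple_graph_def by blast
  have "image_rel enc D x y \<Longrightarrow> x \<in> enc ` W \<and> y \<in> enc ` W \<and> image_rel enc D y x" for x y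
    using D_W unfolding image_rel_def by blast
  moreover have "\<not> image_rel enc D x x" for x
    using D_W enc unfolding image_rel_def by (metis inj_onD)
  moreover have "finite W"
    using H by (simp add: simple_graph_def)
  ultimately show ?thesis
    unfolding simple_graph_def by blast
qed

lemma hom_weight_nonneg_if_positive:
  fixes W :: "'b set" and D :: "'b \<Rightarrow> 'b \<Rightarrow> bool"
  assumes pos: "positive V E" and G: "simple_graph V E" and H: "simple_graph W D"
  shows "0 \<le> hom_weight V E W D w"
proof -
  have "finite W"
    using H by (simp add: simple_graph_def)
  then obtain enc :: "'b \<Rightarrow> nat" where enc: "inj_on enc W"
    using finite_imp_inj_to_nat_seg by meson
  have "0 \<le> hom_weight V E (enc ` W) (image_rel enc D) (\<lambda>S. w (inv_into W enc ` S))"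
    using pos simple_graph_image_rel[OF H enc] unfolding positive_def by blast
  then show ?thesis
    unfolding hom_weight_relabel[OF G H enc] .
qed

section \<open>The sun graph\<close>

type_synonym 'a sun_vertex = "nat + nat \<times> 'a"

locale sun_graph =
  fixes V :: "'a set" and E :: "'a \<Rightarrow> 'a \<Rightarrow> bool" and a b :: 'a and k l :: nat
  assumes graph: "simple_graph V E" and root_edge: "E a b"
    and triangles: "edges_in_triangles E"
    and k_pos: "0 < k" and l_ge_2: "2 \<le> l"
begin

abbreviation "G_V \<equiv> sun_V V a b k l"

abbreviation "G_E \<equiv> sun_E E a b k l"

abbreviation "emb \<equiv> sun_emb a b k l"

definition L :: nat where "L = l + 1"

definition N :: nat where "N = 2 * k * L"

text \<open>
  The cycle vertex v_(c+1) of the paper is cyc c, with indices read modulo N. The root edge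
  of the i-th copy of F is cyc_edge (i * L); the remaining cycle edges are the path edges.
\<close>

definition cyc :: "nat \<Rightarrow> 'a sun_vertex" where "cyc c = Inl (c mod N)"

definition cyc_edge :: "nat \<Rightarrow> ('a sun_vertex) set" where "cyc_edge c = {cyc c, cyc (Suc c)}"

definition path_edges :: "('a sun_vertex) set set" where
  "path_edges = {cyc_edge c | c. c mod L \<noteq> 0}"

definition copy_edge :: "'a sun_vertex \<Rightarrow> 'a sun_vertex \<Rightarrow> bool" where
  "copy_edge x y \<longleftrightarrow> (\<exists>i\<in>{1..2*k}. \<exists>u v. E u v \<and> x = emb i u \<and> y = emb i v)"

lemma E_sym: "E u v \<Longrightarrow> E v u"
  and E_irrefl: "\<not> E u u"
  and E_in_V: "E u v \<Longrightarrow> u \<in> V \<and> v \<in> V"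
  using graph unfolding simple_graph_def by blast+

lemma a_ne_b: "a \<noteq> b"
  using root_edge E_irrefl by blast

lemma L_ge_3: "3 \<le> L"
  using l_ge_2 by (simp add: L_def)

lemma L_dvd_N: "L dvd N"
  by (simp add: N_def)

lemma N_gt_3: "3 < N"
proof -
  have "L \<le> N"
    using k_pos by (simp add: N_def)
  moreover have "L \<noteq> N"
    using k_pos L_ge_3 by (simp add: N_def)
  ultimately show ?thesis
    using L_ge_3 by linarith
qed

lemma cong_N_imp_mod_L: "[x = y] (mod N) \<Longrightarrow> x mod L = y mod L"
  using cong_dvd_modulus_nat[OF _ L_dvd_N] unfolding cong_def .

lemma cong_N_iff_dvd: "[x = y] (mod N) \<longleftrightarrow> int N dvd int x - int y"
  by (simp add: cong_int_iff[symmetric] cong_iff_dvd_diff)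

lemma N_dvd_small_absurd: "int N dvd m \<Longrightarrow> m \<noteq> 0 \<Longrightarrow> \<bar>m\<bar> \<le> 3 \<Longrightarrow> False"
  using dvd_imp_le_int[of m "int N"] N_gt_3 by simp

lemma N_dvd_pair_absurd:
  assumes "int N dvd p" "int N dvd q"
    and "p - q \<noteq> 0 \<and> \<bar>p - q\<bar> \<le> 3 \<or> p + q \<noteq> 0 \<and> \<bar>p + q\<bar> \<le> 3"
  shows False
  using assms(3) N_dvd_small_absurd[OF dvd_diff[OF assms(1,2)]]
    N_dvd_small_absurd[OF dvd_add[OF assms(1,2)]] by blast

lemma cyc_eq_iff: "cyc x = cyc y \<longleftrightarrow> [x = y] (mod N)"
  by (simp add: cyc_def cong_def)

lemma cyc_eq_imp_mod_L: "cyc x = cyc y \<Longrightarrow> x mod L = y mod L"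
  by (simp add: cyc_eq_iff cong_N_imp_mod_L)

lemma cyc_Suc_cong: "cyc x = cyc y \<Longrightarrow> cyc (Suc x) = cyc (Suc y)"
  unfolding cyc_def by (metis Inl_inject mod_Suc_eq)

lemma cyc_ne_Suc: "cyc x \<noteq> cyc (Suc x)"
proof
  assume "cyc x = cyc (Suc x)"
  then have "int N dvd -1"
    by (simp add: cyc_eq_iff cong_N_iff_dvd)
  then show False
    using N_dvd_small_absurd[of "-1"] by simp
qed

lemma Inl_eq_cyc: "c < N \<Longrightarrow> Inl c = cyc c"
  by (simp add: cyc_def)

lemma Inr_notin_range_cyc: "Inr p \<notin> range cyc"
  by (auto simp: cyc_def)

lemma cyc_edge_eq_iff: "cyc_edge x = cyc_edge y \<longleftrightarrow> [x = y] (mod N)"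
proof
  assume "cyc_edge x = cyc_edge y"
  then have "cyc x = cyc y \<or> cyc x = cyc (Suc y) \<and> cyc (Suc x) = cyc y"
    unfolding cyc_edge_def doubleton_eq_iff by blast
  then have "[x = y] (mod N) \<or> [x = Suc y] (mod N) \<and> [Suc x = y] (mod N)"
    by (simp only: cyc_eq_iff)
  moreover have False if "[x = Suc y] (mod N)" "[Suc x = y] (mod N)"
    using N_dvd_pair_absurd[OF that[unfolded cong_N_iff_dvd]] by simp
  ultimately show "[x = y] (mod N)"
    by blast
next
  assume "[x = y] (mod N)"
  then have "cyc x = cyc y"
    by (simp add: cyc_eq_iff)
  then show "cyc_edge x = cyc_edge y"
    using cyc_Suc_cong[OF \<open>cyc x = cyc y\<close>] by (simp add: cyc_edge_def)
qed

lemma cyc_edge_subset_range_cyc: "cyc_edge c \<subseteq> range cyc"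
  by (auto simp: cyc_edge_def)

lemma cyc_edge_in_path_edges_iff: "cyc_edge c \<in> path_edges \<longleftrightarrow> c mod L \<noteq> 0"
proof
  assume "cyc_edge c \<in> path_edges"
  then obtain d where "cyc_edge c = cyc_edge d" "d mod L \<noteq> 0"
    by (auto simp: path_edges_def)
  then show "c mod L \<noteq> 0"
    using cong_N_imp_mod_L by (simp add: cyc_edge_eq_iff)
qed (auto simp: path_edges_def)

lemma path_edges_subset_range_cyc: "e \<in> path_edges \<Longrightarrow> e \<subseteq> range cyc"
  using cyc_edge_subset_range_cyc by (auto simp: path_edges_def)

lemma cyc_in_path_edge: "\<exists>e\<in>path_edges. cyc c \<in> e"
proof (cases "c mod L = 0")
  case True
  define d where "d = c + (N - 1)"
  have "Suc d = c + N"
    using N_gt_3 by (simp add: d_def)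
  then have cyc_Suc_d: "cyc (Suc d) = cyc c"
    by (simp add: cyc_def)
  have "L dvd c + N"
    using True L_dvd_N by (simp add: mod_0_imp_dvd)
  then have "Suc d mod L = 0"
    using \<open>Suc d = c + N\<close> by simp
  have "d mod L \<noteq> 0"
  proof
    assume "d mod L = 0"
    then have "Suc d mod L = 1"
      using L_ge_3 by (simp add: mod_Suc)
    then show False
      using \<open>Suc d mod L = 0\<close> by simp
  qed
  then have "cyc_edge d \<in> path_edges"
    by (simp add: cyc_edge_in_path_edges_iff)
  moreover have "cyc c \<in> cyc_edge d"
    using cyc_Suc_d by (simp add: cyc_edge_def)
  ultimately show ?thesis ..
next
  case False
  then have "cyc_edge c \<in> path_edges"
    by (simp add: cyc_edge_in_path_edges_iff)
  moreover have "cyc c \<in> cyc_edge c"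
    by (simp add: cyc_edge_def)
  ultimately show ?thesis ..
qed

lemma cyc_edge_1_in_path_edges: "cyc_edge 1 \<in> path_edges"
  using L_ge_3 by (simp add: cyc_edge_in_path_edges_iff)

lemma finite_path_edges: "finite path_edges"
proof -
  have "path_edges \<subseteq> cyc_edge ` {..<N}"
  proof
    fix e assume "e \<in> path_edges"
    then obtain c where "e = cyc_edge c"
      by (auto simp: path_edges_def)
    moreover have "cyc_edge c = cyc_edge (c mod N)"
      by (simp add: cyc_edge_eq_iff cong_def)
    moreover have "c mod N < N"
      using N_gt_3 by simp
    ultimately show "e \<in> cyc_edge ` {..<N}"
      by blast
  qed
  then show ?thesis
    by (rule finite_subset) simp
qed

lemma emb_a: "emb i a = cyc (i * L)"
  and emb_b: "emb i b = cyc (Suc (i * L))"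
  and emb_other: "u \<noteq> a \<Longrightarrow> u \<noteq> b \<Longrightarrow> emb i u = Inr (i, u)"
  using a_ne_b by (simp_all add: sun_emb_def cyc_def N_def L_def)

lemma root_mod_L: "i * L mod L = 0" "Suc (i * L) mod L = 1"
  using L_ge_3 by (simp_all add: mod_Suc)

lemma emb_in_range_cyc_iff: "emb i u \<in> range cyc \<longleftrightarrow> u \<in> {a, b}"
proof
  assume "emb i u \<in> range cyc"
  then show "u \<in> {a, b}"
    using emb_other[of u i] Inr_notin_range_cyc by fastforce
qed (auto simp: emb_a emb_b)

lemma root_index_inj:
  assumes "i \<in> {1..2*k}" "j \<in> {1..2*k}" "[i * L = j * L] (mod N)"
  shows "i = j"
proof -
  have "i * L mod N = i mod (2 * k) * L" "j * L mod N = j mod (2 * k) * L"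
    by (simp_all add: N_def mult_mod_left)
  then have "i mod (2 * k) = j mod (2 * k)"
    using assms(3) L_ge_3 by (simp add: cong_def)
  moreover have "m mod (2 * k) = (if m = 2 * k then 0 else m)" if "m \<in> {1..2*k}" for m
    using that by auto
  ultimately show ?thesis
    using assms(1,2) by (auto split: if_splits)
qed

lemma emb_inj:
  assumes "i \<in> {1..2*k}" "j \<in> {1..2*k}" "emb i u = emb j v"
  shows "i = j \<and> u = v"
proof (cases "u \<in> {a, b}")
  case True
  then have v: "v \<in> {a, b}"
    using assms(3) emb_in_range_cyc_iff by metis
  have "u = v \<and> [i * L = j * L] (mod N)"
  proof (cases "u = a"; cases "v = a")
    assume "u = a" "v = a"
    then show ?thesis
      using assms(3) by (simp add: emb_a cyc_eq_iff)
  next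
    assume "u \<noteq> a" "v \<noteq> a"
    then have "u = b" "v = b"
      using True v by auto
    then have "[i * L + 1 = j * L + 1] (mod N)"
      using assms(3) by (simp add: emb_b cyc_eq_iff)
    then show ?thesis
      using \<open>u = b\<close> \<open>v = b\<close> by (simp only: cong_add_rcancel_nat)
  next
    assume "u = a" "v \<noteq> a"
    then have "cyc (i * L) = cyc (Suc (j * L))"
      using assms(3) v by (simp add: emb_a emb_b)
    then show ?thesis
      using root_mod_L by (auto dest: cyc_eq_imp_mod_L)
  next
    assume "u \<noteq> a" "v = a"
    then have "cyc (Suc (i * L)) = cyc (j * L)"
      using assms(3) True by (simp add: emb_a emb_b)
    then show ?thesis
      using root_mod_L by (auto dest: cyc_eq_imp_mod_L)
  qed
  then show ?thesis
    using root_index_inj assms(1,2) by blast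
next
  case False
  then have "emb i u = Inr (i, u)"
    by (simp add: emb_other)
  then have "v \<notin> {a, b}"
    using assms(3) emb_in_range_cyc_iff Inr_notin_range_cyc by metis
  then show ?thesis
    using \<open>emb i u = Inr (i, u)\<close> assms(3) by (simp add: emb_other)
qed

lemma root_cyc_edge_is_copy_edge:
  assumes "c mod L = 0"
  shows "\<exists>i\<in>{1..2*k}. cyc c = emb i a \<and> cyc (Suc c) = emb i b"
proof -
  define q where "q = c div L mod (2 * k)"
  define i where "i = (if q = 0 then 2 * k else q)"
  have "c = c div L * L"
    using assms by (metis add_0_right div_mult_mod_eq)
  then have "c mod N = q * L"
    by (metis N_def q_def mult_mod_left)
  moreover have "q < 2 * k"
    using k_pos by (simp add: q_def)
  then have "i * L mod N = q * L"
    by (simp add: i_def N_def)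
  ultimately have "cyc c = cyc (i * L)"
    by (simp add: cyc_def)
  moreover have "i \<in> {1..2*k}"
    using \<open>q < 2 * k\<close> by (simp add: i_def)
  ultimately show ?thesis
    using cyc_Suc_cong[OF \<open>cyc c = cyc (i * L)\<close>] by (auto simp: emb_a emb_b)
qed

lemma sun_V_eq: "G_V = range cyc \<union> {Inr (i, u) | i u. i \<in> {1..2*k} \<and> u \<in> V - {a, b}}"
proof -
  have "range cyc = (Inl ` {0..<N} :: 'a sun_vertex set)"
  proof (intro equalityI subsetI)
    fix x :: "'a sun_vertex" assume "x \<in> Inl ` {0..<N}"
    then show "x \<in> range cyc"
      using Inl_eq_cyc by auto
  qed (use N_gt_3 in \<open>auto simp: cyc_def\<close>)
  then show ?thesis
    by (simp add: sun_V_def N_def L_def)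
qed

lemma sun_E_iff: "G_E x y \<longleftrightarrow> (\<exists>c. {x, y} = cyc_edge c) \<or> copy_edge x y"
proof -
  have "(\<exists>c<N. x = Inl c \<and> y = Inl (Suc c mod N) \<or> y = Inl c \<and> x = Inl (Suc c mod N))
      \<longleftrightarrow> (\<exists>c. {x, y} = cyc_edge c)"
  proof
    assume "\<exists>c<N. x = Inl c \<and> y = Inl (Suc c mod N) \<or> y = Inl c \<and> x = Inl (Suc c mod N)"
    then obtain c where "c < N" "{x, y} = {Inl c, Inl (Suc c mod N)}"
      by blast
    then have "{x, y} = cyc_edge c"
      by (simp add: cyc_edge_def cyc_def)
    then show "\<exists>c. {x, y} = cyc_edge c" ..
  next
    assume "\<exists>c. {x, y} = cyc_edge c"
    then obtain c where "{x, y} = {Inl (c mod N), Inl (Suc c mod N)}"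
      by (auto simp: cyc_edge_def cyc_def)
    moreover have "Suc c mod N = Suc (c mod N) mod N"
      by (simp add: mod_Suc_eq)
    moreover have "c mod N < N"
      using N_gt_3 by simp
    ultimately show "\<exists>c<N. x = Inl c \<and> y = Inl (Suc c mod N) \<or> y = Inl c \<and> x = Inl (Suc c mod N)"
      by (auto simp: doubleton_eq_iff)
  qed
  then show ?thesis
    by (simp add: sun_E_def copy_edge_def N_def L_def)
qed

lemma copy_edge_sym: "copy_edge x y \<Longrightarrow> copy_edge y x"
  unfolding copy_edge_def using E_sym by blast

lemma sun_E_sym: "G_E x y \<Longrightarrow> G_E y x"
  unfolding sun_E_iff using copy_edge_sym by (metis insert_commute)

lemma copy_edge_between_cyc:
  assumes "copy_edge (cyc x) (cyc y)"
  shows "\<exists>c. {cyc x, cyc y} = cyc_edge c"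
proof -
  obtain i u v where uv: "E u v" "cyc x = emb i u" "cyc y = emb i v"
    using assms unfolding copy_edge_def by blast
  have "u \<in> {a, b}" "v \<in> {a, b}"
    using emb_in_range_cyc_iff uv(2,3) by (metis rangeI)+
  moreover have "u \<noteq> v"
    using uv(1) E_irrefl by blast
  ultimately have "{cyc x, cyc y} = {emb i a, emb i b}"
    using uv(2,3) by auto
  then show ?thesis
    by (auto simp: emb_a emb_b cyc_edge_def)
qed

lemma cyc_adj_iff: "G_E (cyc x) (cyc y) \<longleftrightarrow> [Suc x = y] (mod N) \<or> [Suc y = x] (mod N)"
proof
  assume "G_E (cyc x) (cyc y)"
  then obtain c where "{cyc x, cyc y} = cyc_edge c"
    using copy_edge_between_cyc unfolding sun_E_iff by blast
  then have "cyc x = cyc c \<and> cyc y = cyc (Suc c) \<or> cyc x = cyc (Suc c) \<and> cyc y = cyc c"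
    unfolding cyc_edge_def doubleton_eq_iff by blast
  then have "cyc (Suc x) = cyc y \<or> cyc (Suc y) = cyc x"
  proof (elim disjE conjE)
    assume "cyc x = cyc c" "cyc y = cyc (Suc c)"
    then show ?thesis
      using cyc_Suc_cong[of x c] by simp
  next
    assume "cyc x = cyc (Suc c)" "cyc y = cyc c"
    then show ?thesis
      using cyc_Suc_cong[of y c] by simp
  qed
  then show "[Suc x = y] (mod N) \<or> [Suc y = x] (mod N)"
    by (simp only: cyc_eq_iff)
next
  assume "[Suc x = y] (mod N) \<or> [Suc y = x] (mod N)"
  then have "cyc y = cyc (Suc x) \<or> cyc x = cyc (Suc y)"
    by (auto simp: cyc_eq_iff cong_sym_eq)
  then have "{cyc x, cyc y} = cyc_edge x \<or> {cyc x, cyc y} = cyc_edge y"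
    by (auto simp: cyc_edge_def)
  then show "G_E (cyc x) (cyc y)"
    unfolding sun_E_iff by (metis insert_commute)
qed

lemma sun_E_cyc_edge: "G_E (cyc c) (cyc (Suc c))"
  by (simp add: cyc_adj_iff)

lemma emb_in_sun_V: "i \<in> {1..2*k} \<Longrightarrow> u \<in> V \<Longrightarrow> emb i u \<in> G_V"
  unfolding sun_V_eq by (cases "u \<in> {a, b}") (auto simp: emb_a emb_b emb_other)

lemma sun_E_in_sun_V: "G_E x y \<Longrightarrow> x \<in> G_V \<and> y \<in> G_V"
proof -
  assume "G_E x y"
  then consider c where "{x, y} = cyc_edge c" | "copy_edge x y"
    unfolding sun_E_iff by blast
  then show ?thesis
  proof cases
    case 1
    then have "{x, y} \<subseteq> range cyc"
      by (auto simp: cyc_edge_def)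
    then show ?thesis
      unfolding sun_V_eq by blast
  next
    case 2
    then show ?thesis
      unfolding copy_edge_def using emb_in_sun_V E_in_V by blast
  qed
qed

lemma finite_sun_V: "finite G_V"
proof -
  have "range cyc \<subseteq> Inl ` {..<N}"
    using N_gt_3 by (auto simp: cyc_def)
  then have "finite (range cyc)"
    by (rule finite_subset) simp
  moreover have "{Inr (i, u) | i u. i \<in> {1..2*k} \<and> u \<in> V - {a, b}} \<subseteq> Inr ` ({1..2*k} \<times> V)"
    by auto
  then have "finite {Inr (i, u) | i u. i \<in> {1..2*k} \<and> u \<in> V - {a, b}}"
    by (rule finite_subset) (use graph in \<open>simp add: simple_graph_def\<close>)
  ultimately show ?thesis
    unfolding sun_V_eq by blast
qed

lemma sun_E_irrefl: "\<not> G_E x x"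
proof
  assume "G_E x x"
  then consider c where "{x} = cyc_edge c" | i u v where "i \<in> {1..2*k}" "E u v" "emb i u = emb i v"
    unfolding sun_E_iff copy_edge_def by auto
  then show False
  proof cases
    case 1
    then show False
      using cyc_ne_Suc[of c] by (auto simp: cyc_edge_def)
  next
    case 2
    then show False
      using emb_inj[of i i u v] E_irrefl by blast
  qed
qed

lemma sun_graph_simple: "simple_graph G_V G_E"
  unfolding simple_graph_def
  using finite_sun_V sun_E_in_sun_V sun_E_sym sun_E_irrefl by blast

lemma finite_sun_edges: "finite (edges G_E)"
proof -
  have "edges G_E \<subseteq> (\<lambda>(x, y). {x, y}) ` (G_V \<times> G_V)"
  proof
    fix e assume "e \<in> edges G_E"
    then obtain x y where "e = {x, y}" "G_E x y"
      unfolding edges_def by blast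
    then show "e \<in> (\<lambda>(x, y). {x, y}) ` (G_V \<times> G_V)"
      using sun_E_in_sun_V by (intro image_eqI[of _ _ "(x, y)"]) auto
  qed
  then show ?thesis
    using finite_sun_V by (blast intro: finite_subset)
qed

lemma path_edges_subset_edges: "path_edges \<subseteq> edges G_E"
proof
  fix e assume "e \<in> path_edges"
  then obtain c where "e = {cyc c, cyc (Suc c)}"
    unfolding path_edges_def cyc_edge_def by blast
  then show "e \<in> edges G_E"
    unfolding edges_def using sun_E_cyc_edge by blast
qed

section \<open>Triangles\<close>

lemma cycle_triangle_free: "G_E (cyc c) (cyc d) \<Longrightarrow> G_E (cyc (Suc c)) (cyc d) \<Longrightarrow> False"
  unfolding cyc_adj_iff cong_N_iff_dvd
  by (elim disjE) (erule N_dvd_pair_absurd, assumption, simp)+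

lemma sun_E_cyc_Inr: "G_E (cyc x) (Inr p) \<Longrightarrow> x mod L \<le> 1"
proof -
  assume edge: "G_E (cyc x) (Inr p)"
  have "Inr p \<notin> cyc_edge c" for c
    using cyc_edge_subset_range_cyc Inr_notin_range_cyc by blast
  then obtain i u where "cyc x = emb i u"
    using edge unfolding sun_E_iff copy_edge_def by blast
  then have "u \<in> {a, b}"
    using emb_in_range_cyc_iff by (metis rangeI)
  then have "cyc x = cyc (i * L) \<or> cyc x = cyc (Suc (i * L))"
    using \<open>cyc x = emb i u\<close> by (auto simp: emb_a emb_b)
  then show ?thesis
    using root_mod_L by (auto dest: cyc_eq_imp_mod_L)
qed

lemma path_edge_triangle_free:
  assumes "{x, y} \<in> path_edges" "G_E x z" "G_E y z"
  shows False
proof -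
  obtain c where c: "c mod L \<noteq> 0" "{x, y} = cyc_edge c"
    using assms(1) by (auto simp: path_edges_def)
  then have edges: "G_E (cyc c) z" "G_E (cyc (Suc c)) z"
    using assms(2,3) unfolding cyc_edge_def doubleton_eq_iff by blast+
  consider d where "z = cyc d" | p where "z = Inr p"
    using sun_E_in_sun_V[OF assms(3)] unfolding sun_V_eq by blast
  then show False
  proof cases
    case 1
    then show False
      using edges cycle_triangle_free sun_E_sym by blast
  next
    case 2
    then have "c mod L \<le> 1" "Suc c mod L \<le> 1"
      using edges sun_E_cyc_Inr by blast+
    then show False
      using c(1) L_ge_3 by (simp add: mod_Suc split: if_splits)
  qed
qed

lemma copy_edge_in_triangle: "copy_edge x y \<Longrightarrow> \<exists>z. copy_edge x z \<and> copy_edge y z"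
  using triangles unfolding copy_edge_def edges_in_triangles_def by blast

lemma copy_edge_imp_sun_E: "copy_edge x y \<Longrightarrow> G_E x y"
  by (simp add: sun_E_iff)

lemma copy_edge_not_path_edge: "copy_edge x y \<Longrightarrow> {x, y} \<notin> path_edges"
  using copy_edge_in_triangle copy_edge_imp_sun_E path_edge_triangle_free by blast

lemma non_path_edge_is_copy_edge:
  assumes "G_E x y" "{x, y} \<notin> path_edges"
  shows "copy_edge x y"
proof (cases "copy_edge x y")
  case False
  then obtain c where c: "{x, y} = cyc_edge c"
    using assms(1) unfolding sun_E_iff by blast
  then have "c mod L = 0"
    using assms(2) cyc_edge_in_path_edges_iff by auto
  then obtain i where "i \<in> {1..2*k}" "cyc c = emb i a" "cyc (Suc c) = emb i b"
    using root_cyc_edge_is_copy_edge[OF \<open>c mod L = 0\<close>] by blast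
  then have "{x, y} = {emb i a, emb i b}"
    using c by (simp add: cyc_edge_def)
  then show ?thesis
    unfolding copy_edge_def doubleton_eq_iff using \<open>i \<in> {1..2*k}\<close> root_edge E_sym by blast
next
  case True
  then show ?thesis .
qed

lemma endo_edge: "\<psi> \<in> homs G_V G_E G_V G_E \<Longrightarrow> G_E x y \<Longrightarrow> G_E (\<psi> x) (\<psi> y)"
  unfolding homs_def by blast

lemma endo_preserves_copy_edges:
  assumes "\<psi> \<in> homs G_V G_E G_V G_E" "copy_edge x y"
  shows "copy_edge (\<psi> x) (\<psi> y)"
proof -
  obtain z where "copy_edge x z" "copy_edge y z"
    using copy_edge_in_triangle[OF assms(2)] by blast
  then have "{\<psi> x, \<psi> y} \<notin> path_edges"
    using path_edge_triangle_free endo_edge[OF assms(1)] copy_edge_imp_sun_E by blast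
  then show ?thesis
    using non_path_edge_is_copy_edge endo_edge[OF assms(1)] copy_edge_imp_sun_E assms(2) by blast
qed

section \<open>Root-preserving maps of the cycle\<close>

text \<open>
  A root-preserving map \<pi> describes an endomorphism on the cycle: it traverses every cycle
  edge c either forward, onto the edge \<pi> c, or backward, onto the edge \<pi> (Suc c), and it
  maps root edges exactly onto root edges. The position seg_pos of a cycle vertex runs from 0
  just after a root edge to l just before the next one.
\<close>

definition fwd :: "(nat \<Rightarrow> nat) \<Rightarrow> nat \<Rightarrow> bool" where
  "fwd \<pi> c \<longleftrightarrow> [Suc (\<pi> c) = \<pi> (Suc c)] (mod N)"

definition bwd :: "(nat \<Rightarrow> nat) \<Rightarrow> nat \<Rightarrow> bool" where
  "bwd \<pi> c \<longleftrightarrow> [Suc (\<pi> (Suc c)) = \<pi> c] (mod N)"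

definition root_preserving :: "(nat \<Rightarrow> nat) \<Rightarrow> bool" where
  "root_preserving \<pi> \<longleftrightarrow> (\<forall>c.
     fwd \<pi> c \<and> (\<pi> c mod L = 0 \<longleftrightarrow> c mod L = 0) \<or>
     bwd \<pi> c \<and> (\<pi> (Suc c) mod L = 0 \<longleftrightarrow> c mod L = 0))"

definition dir :: "(nat \<Rightarrow> nat) \<Rightarrow> nat \<Rightarrow> int" where
  "dir \<pi> c = (if fwd \<pi> c then 1 else -1)"

definition seg_pos :: "nat \<Rightarrow> nat" where
  "seg_pos x = (x + l) mod L"

lemma not_fwd_and_bwd: "\<not> (fwd \<pi> c \<and> bwd \<pi> c)"
proof
  assume "fwd \<pi> c \<and> bwd \<pi> c"
  then have "int N dvd int (Suc (\<pi> c)) - int (\<pi> (Suc c))"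
    and "int N dvd int (Suc (\<pi> (Suc c))) - int (\<pi> c)"
    unfolding fwd_def bwd_def cong_N_iff_dvd by blast+
  then show False
    by (rule N_dvd_pair_absurd) simp
qed

lemma root_preserving_step:
  assumes "root_preserving \<pi>"
  shows "fwd \<pi> c \<and> (\<pi> c mod L = 0 \<longleftrightarrow> c mod L = 0) \<or>
    bwd \<pi> c \<and> (\<pi> (Suc c) mod L = 0 \<longleftrightarrow> c mod L = 0)"
  using assms unfolding root_preserving_def by (rule spec)

lemma root_preserving_fwd:
  assumes "root_preserving \<pi>" "fwd \<pi> c"
  shows "\<pi> c mod L = 0 \<longleftrightarrow> c mod L = 0"
  using root_preserving_step[OF assms(1), of c] not_fwd_and_bwd[of \<pi> c] assms(2) by argo

lemma root_preserving_bwd: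
  assumes "root_preserving \<pi>" "\<not> fwd \<pi> c"
  shows "bwd \<pi> c \<and> (\<pi> (Suc c) mod L = 0 \<longleftrightarrow> c mod L = 0)"
  using root_preserving_step[OF assms(1), of c] assms(2) by argo

lemma dir_cases: "dir \<pi> c = 1 \<or> dir \<pi> c = -1"
  by (simp add: dir_def)

lemma seg_pos_eq: "seg_pos x = (x mod L + l) mod L"
  by (simp add: seg_pos_def mod_add_left_eq)

lemma seg_pos_cong: "[x = y] (mod N) \<Longrightarrow> seg_pos x = seg_pos y"
  using cong_N_imp_mod_L by (simp add: seg_pos_eq)

lemma seg_pos_Suc: "seg_pos (Suc x) = x mod L"
proof -
  have "Suc x + l = x + L"
    by (simp add: L_def)
  then have "seg_pos (Suc x) = (x + L) mod L"
    unfolding seg_pos_def by (simp only:)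
  then show ?thesis
    by simp
qed

lemma seg_pos_root: "x mod L = 0 \<Longrightarrow> seg_pos x = l"
  by (simp add: seg_pos_eq L_def)

lemma Suc_seg_pos: "x mod L \<noteq> 0 \<Longrightarrow> Suc (seg_pos x) = x mod L"
proof -
  assume "x mod L \<noteq> 0"
  moreover have "x mod L < L"
    using L_ge_3 by simp
  ultimately have eq: "x mod L + l = (x mod L - 1) + L" and lt: "x mod L - 1 < L"
    unfolding L_def by linarith+
  have "seg_pos x = (x mod L - 1 + L) mod L"
    by (simp only: seg_pos_eq eq)
  also have "\<dots> = x mod L - 1"
    by (simp only: mod_add_self2 mod_less[OF lt])
  finally show ?thesis
    using \<open>x mod L \<noteq> 0\<close> by simp
qed

lemma seg_pos_fwd: "fwd \<pi> c \<Longrightarrow> seg_pos (\<pi> (Suc c)) = \<pi> c mod L"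
  unfolding fwd_def by (metis seg_pos_cong seg_pos_Suc)

lemma seg_pos_bwd: "bwd \<pi> c \<Longrightarrow> seg_pos (\<pi> c) = \<pi> (Suc c) mod L"
  unfolding bwd_def by (metis seg_pos_cong seg_pos_Suc)

lemma seg_pos_step:
  assumes "root_preserving \<pi>" "c mod L \<noteq> 0"
  shows "int (seg_pos (\<pi> (Suc c))) = int (seg_pos (\<pi> c)) + dir \<pi> c"
proof (cases "fwd \<pi> c")
  case True
  then have "\<pi> c mod L \<noteq> 0"
    using root_preserving_fwd[OF assms(1) True] assms(2) by simp
  then have "seg_pos (\<pi> (Suc c)) = Suc (seg_pos (\<pi> c))"
    unfolding seg_pos_fwd[OF True] by (rule Suc_seg_pos[symmetric])
  then show ?thesis
    using True by (simp add: dir_def)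
next
  case False
  then have "bwd \<pi> c" "\<pi> (Suc c) mod L \<noteq> 0"
    using root_preserving_bwd[OF assms(1) False] assms(2) by simp_all
  then have "seg_pos (\<pi> c) = Suc (seg_pos (\<pi> (Suc c)))"
    unfolding seg_pos_bwd[OF \<open>bwd \<pi> c\<close>] using Suc_seg_pos by simp
  then show ?thesis
    using False by (simp add: dir_def)
qed

lemma seg_pos_root_step:
  assumes "root_preserving \<pi>" "c mod L = 0"
  shows "seg_pos (\<pi> c) = (if fwd \<pi> c then l else 0) \<and>
    seg_pos (\<pi> (Suc c)) = (if fwd \<pi> c then 0 else l)"
proof (cases "fwd \<pi> c")
  case True
  then have "\<pi> c mod L = 0"
    using root_preserving_fwd[OF assms(1) True] assms(2) by simp
  then show ?thesis
    using True seg_pos_root seg_pos_fwd[OF True] by simp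
next
  case False
  then have "bwd \<pi> c" "\<pi> (Suc c) mod L = 0"
    using root_preserving_bwd[OF assms(1) False] assms(2) by simp_all
  then show ?thesis
    using False seg_pos_root seg_pos_bwd[OF \<open>bwd \<pi> c\<close>] by simp
qed

text \<open>
  The positions of the images of one path form a walk of l unit steps between the ends 0 and
  l; it cannot return to its start when l is odd, nor when the root edges on both sides keep
  the direction, so it is monotone.
\<close>

lemma dir_const_on_segment:
  assumes \<pi>: "root_preserving \<pi>"
    and next_root: "odd l \<or> dir \<pi> (i * L + L) = dir \<pi> (i * L)"
    and j: "j \<le> L"
  shows "dir \<pi> (i * L + j) = dir \<pi> (i * L)"
proof -
  define s where "s = dir \<pi> (i * L)"
  define q where "q j = int (seg_pos (\<pi> (Suc (i * L + j))))" for j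
  have step: "q (Suc j) = q j + dir \<pi> (i * L + Suc j)" if "j < l" for j
  proof -
    have "Suc j < L"
      using that by (simp add: L_def)
    then show ?thesis
      using seg_pos_step[OF \<pi>, of "i * L + Suc j"] by (simp add: q_def)
  qed
  have q0: "q 0 = (if s = 1 then 0 else int l)"
    using seg_pos_root_step[OF \<pi>, of "i * L"] by (simp add: q_def s_def dir_def)
  have ql: "q l = (if dir \<pi> (i * L + L) = 1 then int l else 0)"
  proof -
    have "Suc (i * L + l) = i * L + L"
      by (simp add: L_def)
    then have "q l = int (seg_pos (\<pi> (i * L + L)))"
      by (simp only: q_def)
    then show ?thesis
      using seg_pos_root_step[OF \<pi>, of "i * L + L"] by (simp add: dir_def)
  qed
  have s: "s = 1 \<or> s = -1"
    by (simp add: s_def dir_cases)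
  have "\<bar>q (Suc j) - q j\<bar> = 1" if "j < l" for j
    using step[OF that] dir_cases[of \<pi> "i * L + Suc j"] by auto
  moreover have "q l = q 0 \<or> q l = q 0 + s * int l"
    using q0 ql s dir_cases[of \<pi> "i * L + L"] by auto
  moreover have "odd l \<or> q l \<noteq> q 0"
    using next_root q0 ql l_ge_2 by (auto simp: s_def)
  ultimately have walk: "q l = q 0 + s * int l" "\<And>j. j < l \<Longrightarrow> q (Suc j) = q j + s"
    using unit_walk_monotone[OF _ s] by blast+
  show ?thesis
  proof (cases "j = L \<or> j = 0")
    case True
    then show ?thesis
      using walk(1) q0 ql l_ge_2 s dir_cases[of \<pi> "i * L + L"] by (auto simp: s_def)
  next
    case False
    then obtain j' where "j = Suc j'" "j' < l"
      using j by (cases j) (auto simp: L_def)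
    then show ?thesis
      using walk(2) step by (simp add: s_def)
  qed
qed

lemma dir_const:
  assumes \<pi>: "root_preserving \<pi>" and roots: "odd l \<or> (\<forall>i. fwd \<pi> (i * L))"
  shows "dir \<pi> c = dir \<pi> 0"
proof -
  have next_root: "odd l \<or> dir \<pi> (i * L + L) = dir \<pi> (i * L)" for i
  proof (cases "odd l")
    case False
    then have "fwd \<pi> (Suc i * L)" "fwd \<pi> (i * L)"
      using roots by blast+
    then show ?thesis
      by (simp add: dir_def add.commute)
  qed simp
  have segment: "dir \<pi> (i * L + j) = dir \<pi> (i * L)" if "j \<le> L" for i j
    using dir_const_on_segment[OF \<pi> next_root that] .
  have "dir \<pi> (i * L) = dir \<pi> 0" for i
  proof (induction i)
    case (Suc i)
    then show ?case
      using segment[of L i] by (simp add: add.commute)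
  qed simp
  moreover have "c mod L \<le> L"
    using L_ge_3 by simp
  then have "dir \<pi> (c div L * L + c mod L) = dir \<pi> (c div L * L)"
    by (rule segment)
  ultimately show ?thesis
    by simp
qed

lemma fwd_everywhere_cong: "(\<And>c. fwd \<pi> c) \<Longrightarrow> [\<pi> c = \<pi> 0 + c] (mod N)"
proof (induction c)
  case (Suc c)
  have "[\<pi> (Suc c) = \<pi> c + 1] (mod N)"
    using Suc.prems[of c] by (simp add: fwd_def cong_sym_eq)
  also have "[\<pi> c + 1 = \<pi> 0 + c + 1] (mod N)"
    using Suc.IH[OF Suc.prems] by (simp only: cong_add_rcancel_nat)
  finally show ?case
    by simp
qed simp

lemma bwd_everywhere_cong: "(\<And>c. bwd \<pi> c) \<Longrightarrow> [\<pi> c + c = \<pi> 0] (mod N)"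
proof (induction c)
  case (Suc c)
  have "[\<pi> (Suc c) + Suc c = \<pi> c + c] (mod N)"
    using Suc.prems[of c] cong_add_rcancel_nat[of "Suc (\<pi> (Suc c))" c "\<pi> c" N]
    by (simp add: bwd_def)
  also have "[\<pi> c + c = \<pi> 0] (mod N)"
    using Suc.IH[OF Suc.prems] .
  finally show ?case .
qed simp

lemma root_preserving_cong_inj:
  assumes \<pi>: "root_preserving \<pi>" and roots: "odd l \<or> (\<forall>i. fwd \<pi> (i * L))"
    and eq: "[\<pi> x = \<pi> y] (mod N)"
  shows "[x = y] (mod N)"
proof (cases "fwd \<pi> 0")
  case True
  then have all_fwd: "fwd \<pi> c" for c
    using dir_const[OF \<pi> roots, of c] by (simp add: dir_def split: if_splits)
  have "[\<pi> 0 + x = \<pi> x] (mod N)"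
    using fwd_everywhere_cong[OF all_fwd] by (rule cong_sym)
  also have "[\<pi> x = \<pi> y] (mod N)"
    by (fact eq)
  also have "[\<pi> y = \<pi> 0 + y] (mod N)"
    using fwd_everywhere_cong[OF all_fwd] .
  finally show ?thesis
    by (simp only: cong_add_lcancel_nat)
next
  case False
  then have not_fwd: "\<not> fwd \<pi> c" for c
    using dir_const[OF \<pi> roots, of c] by (simp add: dir_def split: if_splits)
  have all_bwd: "bwd \<pi> c" for c
    using root_preserving_bwd[OF \<pi> not_fwd] by simp
  have "[\<pi> x + x = \<pi> 0] (mod N)"
    using bwd_everywhere_cong[OF all_bwd] .
  also have "[\<pi> 0 = \<pi> y + y] (mod N)"
    using bwd_everywhere_cong[OF all_bwd] by (rule cong_sym)
  also have "[\<pi> y + y = \<pi> x + y] (mod N)"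
    using eq by (simp add: cong_add_rcancel_nat cong_sym_eq)
  finally show ?thesis
    by (simp only: cong_add_lcancel_nat)
qed

section \<open>Endomorphisms of the sun graph\<close>

lemma endo_image_cyc_edge_in_path_edges_iff:
  assumes \<psi>: "\<psi> \<in> homs G_V G_E G_V G_E" and top: "\<forall>e\<in>path_edges. \<psi> ` e \<in> path_edges"
  shows "\<psi> ` cyc_edge c \<in> path_edges \<longleftrightarrow> c mod L \<noteq> 0"
proof
  assume "c mod L \<noteq> 0"
  then show "\<psi> ` cyc_edge c \<in> path_edges"
    using top cyc_edge_in_path_edges_iff by blast
next
  assume image: "\<psi> ` cyc_edge c \<in> path_edges"
  show "c mod L \<noteq> 0"
  proof
    assume "c mod L = 0"
    then have "copy_edge (cyc c) (cyc (Suc c))"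
      using non_path_edge_is_copy_edge sun_E_cyc_edge cyc_edge_in_path_edges_iff
      by (simp add: cyc_edge_def)
    then have "{\<psi> (cyc c), \<psi> (cyc (Suc c))} \<notin> path_edges"
      using endo_preserves_copy_edges[OF \<psi>] copy_edge_not_path_edge by blast
    then show False
      using image by (simp add: cyc_edge_def)
  qed
qed

lemma endo_cyc_in_range_cyc:
  assumes top: "\<forall>e\<in>path_edges. \<psi> ` e \<in> path_edges"
  shows "\<psi> (cyc c) \<in> range cyc"
proof -
  obtain e where "e \<in> path_edges" "cyc c \<in> e"
    using cyc_in_path_edge by blast
  then have "\<psi> ` e \<subseteq> range cyc"
    using top path_edges_subset_range_cyc by blast
  moreover have "\<psi> (cyc c) \<in> \<psi> ` e"
    using \<open>cyc c \<in> e\<close> by (rule imageI)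
  ultimately show ?thesis
    by blast
qed

lemma endo_cycle_map:
  assumes \<psi>: "\<psi> \<in> homs G_V G_E G_V G_E" and top: "\<forall>e\<in>path_edges. \<psi> ` e \<in> path_edges"
  obtains \<pi> where "\<And>c. \<psi> (cyc c) = cyc (\<pi> c)" and "root_preserving \<pi>"
proof -
  have "\<exists>d. \<psi> (cyc c) = cyc d" for c
    using endo_cyc_in_range_cyc[OF top] by blast
  then obtain \<pi> where \<pi>: "\<And>c. \<psi> (cyc c) = cyc (\<pi> c)"
    by metis
  have step: "fwd \<pi> c \<and> (\<pi> c mod L = 0 \<longleftrightarrow> c mod L = 0) \<or>
      bwd \<pi> c \<and> (\<pi> (Suc c) mod L = 0 \<longleftrightarrow> c mod L = 0)" for c
  proof -
    note path_iff = endo_image_cyc_edge_in_path_edges_iff[OF \<psi> top, of c]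
    have "G_E (cyc (\<pi> c)) (cyc (\<pi> (Suc c)))"
      using endo_edge[OF \<psi> sun_E_cyc_edge] by (simp add: \<pi>)
    then consider "fwd \<pi> c" | "bwd \<pi> c"
      unfolding cyc_adj_iff fwd_def bwd_def by blast
    then show ?thesis
    proof cases
      case 1
      then have "cyc (\<pi> (Suc c)) = cyc (Suc (\<pi> c))"
        by (simp add: fwd_def cyc_eq_iff cong_sym_eq)
      then have "\<psi> ` cyc_edge c = cyc_edge (\<pi> c)"
        by (simp add: cyc_edge_def \<pi>)
      then have "\<pi> c mod L \<noteq> 0 \<longleftrightarrow> c mod L \<noteq> 0"
        using path_iff cyc_edge_in_path_edges_iff by simp
      then show ?thesis
        using 1 by argo
    next
      case 2
      then have "cyc (\<pi> c) = cyc (Suc (\<pi> (Suc c)))"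
        by (simp add: bwd_def cyc_eq_iff cong_sym_eq)
      then have "\<psi> ` cyc_edge c = cyc_edge (\<pi> (Suc c))"
        by (auto simp: cyc_edge_def \<pi>)
      then have "\<pi> (Suc c) mod L \<noteq> 0 \<longleftrightarrow> c mod L \<noteq> 0"
        using path_iff cyc_edge_in_path_edges_iff by simp
      then show ?thesis
        using 2 by argo
    qed
  qed
  have "root_preserving \<pi>"
    unfolding root_preserving_def by (intro allI) (fact step)
  then show thesis
    by (rule that[OF \<pi>])
qed

lemma endo_copy_edge_stays_in_copy:
  assumes \<psi>: "\<psi> \<in> homs G_V G_E G_V G_E" and i: "i \<in> {1..2*k}" and j: "j \<in> {1..2*k}"
    and uv: "E u v" and u: "\<psi> (emb i u) = emb j p"
  shows "\<exists>q. E p q \<and> \<psi> (emb i v) = emb j q"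
proof -
  have "copy_edge (emb i u) (emb i v)"
    using i uv unfolding copy_edge_def by blast
  then have "copy_edge (\<psi> (emb i u)) (\<psi> (emb i v))"
    by (rule endo_preserves_copy_edges[OF \<psi>])
  then obtain j' p' q' where j': "j' \<in> {1..2*k}" "E p' q'"
    "\<psi> (emb i u) = emb j' p'" "\<psi> (emb i v) = emb j' q'"
    unfolding copy_edge_def by blast
  then have "j' = j \<and> p' = p"
    using emb_inj[OF j'(1) j] u by metis
  then show ?thesis
    using j' by blast
qed

text \<open>
  Copy edges stay within one copy, so the vertices of copy i that \<psi> sends into copy j are
  closed under adjacency; on them \<psi> induces an endomorphism of F, which is extended by
  the identity.
\<close>

lemma endo_induces_copy_endo:
  assumes \<psi>: "\<psi> \<in> homs G_V G_E G_V G_E" and i: "i \<in> {1..2*k}" and j: "j \<in> {1..2*k}"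
  obtains g where "g \<in> homs V E V E"
    and "\<And>u. u \<in> V \<Longrightarrow> \<psi> (emb i u) \<in> emb j ` V \<Longrightarrow> emb j (g u) = \<psi> (emb i u)"
proof -
  have inj: "inj_on (emb j) V"
    using emb_inj j by (auto simp: inj_on_def)
  define S where "S = {u \<in> V. \<psi> (emb i u) \<in> emb j ` V}"
  define g where "g = restrict (\<lambda>u. if u \<in> S then the_inv_into V (emb j) (\<psi> (emb i u)) else u) V"
  have g_S: "g u \<in> V \<and> emb j (g u) = \<psi> (emb i u)" if "u \<in> S" for u
    using that inj unfolding S_def g_def by (simp add: the_inv_into_into f_the_inv_into_f)
  have g_not_S: "g u = u" if "u \<in> V" "u \<notin> S" for u
    using that unfolding g_def by simp
  have closed: "v \<in> S \<and> E (g u) (g v)" if uv: "E u v" and uS: "u \<in> S" for u v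
  proof -
    obtain q where q: "E (g u) q" "\<psi> (emb i v) = emb j q"
      using endo_copy_edge_stays_in_copy[OF \<psi> i j uv] g_S[OF uS] by metis
    then have "v \<in> S" "g v = q"
      using E_in_V[OF uv] E_in_V[OF q(1)] g_S inj unfolding S_def by (auto simp: inj_on_def)
    then show ?thesis
      using q(1) by simp
  qed
  have "g \<in> homs V E V E"
    unfolding homs_def
  proof (intro CollectI conjI allI impI)
    show "g \<in> V \<rightarrow>\<^sub>E V"
    proof (rule PiE_I)
      fix u assume "u \<in> V"
      then show "g u \<in> V"
        using g_S g_not_S by (cases "u \<in> S") simp_all
    qed (simp add: g_def)
    fix u v assume uv: "E u v"
    show "E (g u) (g v)"
    proof (cases "u \<in> S")
      case True
      then show ?thesis
        using closed uv by blast
    next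
      case False
      then have "v \<notin> S"
        using closed E_sym uv by blast
      then show ?thesis
        using False g_not_S E_in_V uv by simp
    qed
  qed
  then show thesis
    using that g_S unfolding S_def by blast
qed

lemma rigid_endo_preserves_root_orientation:
  assumes rigid: "rigid V E" and \<psi>: "\<psi> \<in> homs G_V G_E G_V G_E" and i: "i \<in> {1..2*k}"
  obtains j where "j \<in> {1..2*k}" "\<psi> (emb i a) = emb j a" "\<psi> (emb i b) = emb j b"
proof -
  have "copy_edge (emb i a) (emb i b)"
    using i root_edge unfolding copy_edge_def by blast
  then have "copy_edge (\<psi> (emb i a)) (\<psi> (emb i b))"
    by (rule endo_preserves_copy_edges[OF \<psi>])
  then obtain j p q where j: "j \<in> {1..2*k}" and pq: "E p q"
    and "\<psi> (emb i a) = emb j p" "\<psi> (emb i b) = emb j q"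
    unfolding copy_edge_def by blast
  moreover obtain g where "g \<in> homs V E V E"
    and g: "\<And>u. u \<in> V \<Longrightarrow> \<psi> (emb i u) \<in> emb j ` V \<Longrightarrow> emb j (g u) = \<psi> (emb i u)"
    using endo_induces_copy_endo[OF \<psi> i j] by blast
  then have "g a = a" "g b = b"
    using rigid E_in_V[OF root_edge] unfolding rigid_def by auto
  ultimately show thesis
    using that[OF j] g E_in_V[OF root_edge] E_in_V[OF pq] by (metis imageI)
qed

lemma endo_inj_on_cycle:
  assumes \<psi>: "\<psi> \<in> homs G_V G_E G_V G_E" and top: "\<forall>e\<in>path_edges. \<psi> ` e \<in> path_edges"
    and odd_or_rigid: "odd l \<or> rigid V E"
  shows "inj_on \<psi> (range cyc)"
proof -
  obtain \<pi> where \<pi>: "\<And>c. \<psi> (cyc c) = cyc (\<pi> c)" and rp: "root_preserving \<pi>"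
    using endo_cycle_map[OF \<psi> top] by blast
  have roots: "odd l \<or> (\<forall>i. fwd \<pi> (i * L))"
  proof (cases "odd l")
    case False
    then have rigid: "rigid V E"
      using odd_or_rigid by blast
    have "fwd \<pi> (i * L)" for i
    proof -
      obtain i' where i': "i' \<in> {1..2*k}" "cyc (i * L) = emb i' a" "cyc (Suc (i * L)) = emb i' b"
        using root_cyc_edge_is_copy_edge[of "i * L"] by auto
      obtain j where "\<psi> (emb i' a) = emb j a" "\<psi> (emb i' b) = emb j b"
        using rigid_endo_preserves_root_orientation[OF rigid \<psi> i'(1)] by blast
      then have "cyc (\<pi> (i * L)) = cyc (j * L)" "cyc (\<pi> (Suc (i * L))) = cyc (Suc (j * L))"
        unfolding \<pi>[symmetric] i'(2,3) by (simp_all only: emb_a emb_b)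
      then have "cyc (Suc (\<pi> (i * L))) = cyc (\<pi> (Suc (i * L)))"
        using cyc_Suc_cong[of "\<pi> (i * L)" "j * L"] by simp
      then show ?thesis
        by (simp add: fwd_def cyc_eq_iff)
    qed
    then show ?thesis
      by blast
  qed simp
  show ?thesis
  proof (rule inj_onI)
    fix x y assume "x \<in> range cyc" "y \<in> range cyc" "\<psi> x = \<psi> y"
    then obtain c d where "x = cyc c" "y = cyc d" "cyc (\<pi> c) = cyc (\<pi> d)"
      using \<pi> by auto
    then show "x = y"
      using root_preserving_cong_inj[OF rp roots] by (simp add: cyc_eq_iff)
  qed
qed

lemma endo_permutes_path_edges:
  assumes \<psi>: "\<psi> \<in> homs G_V G_E G_V G_E" and top: "\<forall>e\<in>path_edges. \<psi> ` e \<in> path_edges"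
    and odd_or_rigid: "odd l \<or> rigid V E"
  shows "bij_betw ((`) \<psi>) path_edges path_edges"
proof -
  have inj: "inj_on ((`) \<psi>) path_edges"
    using inj_on_image_eq_iff[OF endo_inj_on_cycle[OF assms]] path_edges_subset_range_cyc
    by (simp add: inj_on_def)
  moreover have "(`) \<psi> ` path_edges \<subseteq> path_edges"
    using top by blast
  then have "(`) \<psi> ` path_edges = path_edges"
    using endo_inj_surj[OF finite_path_edges _ inj] by blast
  ultimately show ?thesis
    by (simp add: bij_betw_def)
qed

section \<open>The weighting\<close>

definition weight :: "real \<Rightarrow> 'a sun_vertex set \<Rightarrow> real" where
  "weight t e = (if e = cyc_edge 1 then - t else if e \<in> path_edges then t else 1)"

lemma endo_weight_eq_path_weight:
  assumes \<psi>: "\<psi> \<in> homs G_V G_E G_V G_E"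
  shows "(\<Prod>e\<in>edges G_E. weight t (\<psi> ` e)) = (\<Prod>e\<in>path_edges. weight t (\<psi> ` e))"
proof -
  have "(\<Prod>e\<in>edges G_E - path_edges. weight t (\<psi> ` e)) = 1"
  proof (rule prod.neutral, rule ballI)
    fix e assume e: "e \<in> edges G_E - path_edges"
    then obtain x y where "e = {x, y}" "G_E x y"
      unfolding edges_def by blast
    moreover have "{x, y} \<notin> path_edges"
      using e \<open>e = {x, y}\<close> by blast
    ultimately have "copy_edge (\<psi> x) (\<psi> y)"
      using non_path_edge_is_copy_edge endo_preserves_copy_edges[OF \<psi>] by blast
    then have "\<psi> ` e \<notin> path_edges"
      using copy_edge_not_path_edge \<open>e = {x, y}\<close> by simp
    then show "weight t (\<psi> ` e) = 1"
      using cyc_edge_1_in_path_edges by (auto simp: weight_def)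
  qed
  then show ?thesis
    using prod.subset_diff[OF path_edges_subset_edges finite_sun_edges, of "\<lambda>e. weight t (\<psi> ` e)"]
    by simp
qed

lemma path_weight: "(\<Prod>e\<in>path_edges. weight t e) = - (t ^ card path_edges)"
proof -
  have "(\<Prod>e\<in>path_edges. weight t e) = weight t (cyc_edge 1) * (\<Prod>e\<in>path_edges - {cyc_edge 1}. weight t e)"
    by (rule prod.remove[OF finite_path_edges cyc_edge_1_in_path_edges])
  also have "(\<Prod>e\<in>path_edges - {cyc_edge 1}. weight t e) = (\<Prod>e\<in>path_edges - {cyc_edge 1}. t)"
    by (rule prod.cong) (auto simp: weight_def)
  also have "\<dots> = t ^ (card path_edges - 1)"
    by (simp only: prod_constant card_Diff_singleton[OF cyc_edge_1_in_path_edges])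
  also have "weight t (cyc_edge 1) = - t"
    by (simp add: weight_def)
  also have "card path_edges \<noteq> 0"
    using finite_path_edges cyc_edge_1_in_path_edges by auto
  then have "- t * t ^ (card path_edges - 1) = - (t ^ card path_edges)"
    by (simp add: power_eq_if)
  finally show ?thesis .
qed

lemma path_weight_bound:
  assumes "1 \<le> t" "e1 \<in> path_edges" "f e1 \<notin> path_edges"
  shows "(\<Prod>e\<in>path_edges. weight t (f e)) \<le> t ^ (card path_edges - 1)"
proof -
  have "(\<Prod>e\<in>path_edges. weight t (f e)) \<le> (\<Prod>e\<in>path_edges. \<bar>weight t (f e)\<bar>)"
    by (simp add: abs_prod[symmetric])
  also have "\<dots> = \<bar>weight t (f e1)\<bar> * (\<Prod>e\<in>path_edges - {e1}. \<bar>weight t (f e)\<bar>)"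
    using prod.remove[OF finite_path_edges assms(2)] by simp
  also have "\<bar>weight t (f e1)\<bar> = 1"
    using assms(3) cyc_edge_1_in_path_edges by (auto simp: weight_def)
  also have "(\<Prod>e\<in>path_edges - {e1}. \<bar>weight t (f e)\<bar>) \<le> t ^ (card path_edges - 1)"
    using prod_le_power[of "path_edges - {e1}" "\<lambda>e. \<bar>weight t (f e)\<bar>" t "card path_edges - 1"]
      assms(1) card_Diff_singleton[OF assms(2)] by (auto simp: weight_def)
  finally show ?thesis
    by simp
qed

lemma finite_endos: "finite (homs G_V G_E G_V G_E)"
proof -
  have "homs G_V G_E G_V G_E \<subseteq> G_V \<rightarrow>\<^sub>E G_V"
    unfolding homs_def by blast
  moreover have "finite (G_V \<rightarrow>\<^sub>E G_V)"
    by (rule finite_PiE) (simp_all add: finite_sun_V)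
  ultimately show ?thesis
    by (rule finite_subset)
qed

lemma id_endo: "restrict id G_V \<in> homs G_V G_E G_V G_E"
  unfolding homs_def using sun_E_in_sun_V by auto

lemma id_path_weight: "(\<Prod>e\<in>path_edges. weight t (restrict id G_V ` e)) = - (t ^ card path_edges)"
proof -
  have "restrict id G_V ` e = e" if "e \<in> path_edges" for e
  proof -
    have "e \<subseteq> G_V"
      using that path_edges_subset_edges sun_E_in_sun_V unfolding edges_def by blast
    then show ?thesis
      by auto
  qed
  then show ?thesis
    using path_weight by (simp cong: prod.cong)
qed

lemma endo_path_weight_le:
  assumes \<psi>: "\<psi> \<in> homs G_V G_E G_V G_E" and t: "1 \<le> t" and odd_or_rigid: "odd l \<or> rigid V E"
  shows "(\<Prod>e\<in>path_edges. weight t (\<psi> ` e)) \<le> t ^ (card path_edges - 1)"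
proof (cases "\<forall>e\<in>path_edges. \<psi> ` e \<in> path_edges")
  case True
  have "bij_betw ((`) \<psi>) path_edges path_edges"
    using endo_permutes_path_edges[OF \<psi> True odd_or_rigid] .
  then have "(\<Prod>e\<in>path_edges. weight t (\<psi> ` e)) = (\<Prod>e\<in>path_edges. weight t e)"
    by (rule prod.reindex_bij_betw)
  also have "\<dots> = - (t ^ card path_edges)"
    by (rule path_weight)
  also have "\<dots> \<le> t ^ (card path_edges - 1)"
    using t by (simp add: order_trans[of _ 0])
  finally show ?thesis .
next
  case False
  then obtain e1 where "e1 \<in> path_edges" "\<psi> ` e1 \<notin> path_edges"
    by blast
  then show ?thesis
    using path_weight_bound[OF t, of e1 "(`) \<psi>"] by simp
qed

theorem sun_graph_not_positive:
  assumes odd_or_rigid: "odd l \<or> rigid V E"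
  shows "\<not> positive G_V G_E"
proof
  assume pos: "positive G_V G_E"
  define t where "t = real (card (homs G_V G_E G_V G_E))"
  define f where "f \<psi> = (\<Prod>e\<in>edges G_E. weight t (\<psi> ` e))" for \<psi>
  obtain n where n: "card path_edges = Suc n"
    using finite_path_edges cyc_edge_1_in_path_edges by (metis card_gt_0_iff empty_iff gr0_implies_Suc)
  have "1 \<le> t"
    using finite_endos id_endo by (simp add: t_def Suc_le_eq card_gt_0_iff) blast
  have "hom_weight G_V G_E G_V G_E (weight t) = sum f (homs G_V G_E G_V G_E)"
    by (simp add: hom_weight_def f_def)
  also have "\<dots> < 0"
  proof (rule sum_negative_if_one_term_dominates[OF finite_endos id_endo])
    show "f (restrict id G_V) = - (real (card (homs G_V G_E G_V G_E)) ^ Suc n)"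
      using id_path_weight n endo_weight_eq_path_weight[OF id_endo] by (simp add: f_def t_def)
    show "f \<psi> \<le> real (card (homs G_V G_E G_V G_E)) ^ n" if "\<psi> \<in> homs G_V G_E G_V G_E" for \<psi>
      using endo_path_weight_le[OF that \<open>1 \<le> t\<close> odd_or_rigid] n endo_weight_eq_path_weight[OF that]
      by (simp add: f_def t_def)
  qed
  finally show False
    using hom_weight_nonneg_if_positive[OF pos sun_graph_simple sun_graph_simple, of "weight t"]
    by simp
qed

end

theorem mainTheorem13:
  fixes V :: "'a set" and E :: "'a \<Rightarrow> 'a \<Rightarrow> bool" and a b :: 'a and k l :: nat
  assumes "k \<ge> 2" and "l \<ge> 2"
    and "simple_graph V E" and "E a b" and "connected V E"
    and "\<forall>v. \<not> cut_vertex V E v"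
    and "edges_in_triangles E"
    and "\<forall>\<phi>\<in>homs V E V E. \<forall>\<psi>\<in>homs V E V E.
           \<phi> \<noteq> restrict id V \<longrightarrow> \<psi> \<noteq> restrict id V \<longrightarrow> \<phi> = \<psi>"
    and "\<forall>\<phi>\<in>homs V E V E. \<phi> \<noteq> restrict id V \<longrightarrow>
           automorphism V E \<phi> \<and> \<phi> a = b \<and> \<phi> b = a"
    and "odd l \<or> (even l \<and> rigid V E)"
  shows "\<not> positive (sun_V V a b k l) (sun_E E a b k l)"
proof -
  interpret sun_graph V E a b k l
    using assms(1-4,7) by unfold_locales auto
  show ?thesis
    using assms(10) sun_graph_not_positive by blast
qed

end
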